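(* Let $d\ge2$ and let $Q$ be a qplex. A map $f:S\to Q$ is an isomorphism of quantum state space onto $Q$ if and only if there is a SIC $\{\Pi_j\}_{j=1}^{d^2}$ such that $(f(\rho))(j)=\frac1d\mathrm{Tr}(\rho\Pi_j)$ for all $j$ and all $\rho\in S$. In particular, a SIC exists in dimension $d$ if and only if a Hilbert qplex exists in $\mathbb{R}^{d^2}$.
   Context: Fix an integer $d\ge 2$. $\langle\cdot,\cdot\rangle$ is the standard inner product on $\mathbb{R}^{d^2}$, $\|\cdot\|$ the Euclidean norm. $\Delta=\{p\in\mathbb{R}^{d^2}: p(i)\ge0,\ \sum_ip(i)=1\}$; $H=\{u\in\mathbb{R}^{d^2}:\sum_i u(i)=1\}$; $c=(1/d^2,\dots,1/d^2)$. For $A\subseteq H$ the polar is $A^*=\{u\in H:\langle u,v\rangle\ge\frac{1}{d(d+1)}\ \forall v\in A\}$. Out-ball $B_{\rm o}=\{u\in H:\|u-c\|\le r_{\rm o}\}$, $r_{\rm o}^2=\frac{d-1}{d^2(d+1)}$. A qplex is a set $Q\subseteq\Delta\cap B_{\rm o}$ with $Q^*=Q$. Let $B_H$ be the real vector space of Hermitian operators on $\mathbb{C}^d$ and $S$ the set of density matrices (positive semidefinite, trace 1). An isomorphism of quantum state space onto a qplex $Q$ is (the restriction to $S$ of) an $\mathbb{R}$-linear bijection $f:B_H\to\mathbb{R}^{d^2}$ with $f(S)=Q$ and $\langle f(\rho),f(\rho')\rangle=\frac{\mathrm{Tr}(\rho\rho')+1}{d(d+1)}$ for all $\rho,\rho'\in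 S$; a qplex admitting such an $f$ is a Hilbert qplex. A SIC in dimension $d$ is a set of $d^2$ rank-one orthogonal projectors $\Pi_1,\dots,\Pi_{d^2}$ on $\mathbb{C}^d$ with $\mathrm{Tr}(\Pi_k\Pi_l)=\frac{d\delta_{kl}+1}{d+1}$. *)

theory Defs
  imports "HOL-Analysis.Analysis"
begin

(* Operators on C^d are complex^'n^'n with d = CARD('n).
   Vectors in R^(d^2) are real^'k with CARD('k) = d^2. *)

definition adj :: "complex^'n^'n \<Rightarrow> complex^'n^'n" where
  "adj A = (\<chi> i j. cnj (A $ j $ i))"

definition hermitian :: "complex^'n^'n \<Rightarrow> bool" where
  "hermitian A \<longleftrightarrow> adj A = A"

definition herm_ops :: "(complex^'n^'n) set" where
  "herm_ops = {A. hermitian A}"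

definition psd :: "complex^'n^'n \<Rightarrow> bool" where
  "psd A \<longleftrightarrow> hermitian A \<and>
     (\<forall>x::complex^'n. 0 \<le> Re (\<Sum>i\<in>UNIV. \<Sum>j\<in>UNIV. cnj (x $ i) * A $ i $ j * x $ j))"

definition density_matrices :: "(complex^'n^'n) set" where
  "density_matrices = {\<rho>. psd \<rho> \<and> trace \<rho> = 1}"

definition rank_one_projector :: "complex^'n^'n \<Rightarrow> bool" where
  "rank_one_projector P \<longleftrightarrow> hermitian P \<and> P ** P = P \<and> rank P = 1"

definition is_SIC :: "('k::finite \<Rightarrow> complex^'n^'n) \<Rightarrow> bool" where
  "is_SIC P \<longleftrightarrow> CARD('k) = CARD('n)^2 \<and> inj P \<and> (\<forall>k. rank_one_projector (P k)) \<and>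
     (\<forall>k l. trace (P k ** P l) =
        complex_of_real ((real CARD('n) * (if k = l then 1 else 0) + 1) / (real CARD('n) + 1)))"

definition prob_simplex :: "(real^'k) set" where
  "prob_simplex = {p. (\<forall>i. 0 \<le> p $ i) \<and> (\<Sum>i\<in>UNIV. p $ i) = 1}"

definition hyperplane_H :: "(real^'k) set" where
  "hyperplane_H = {u. (\<Sum>i\<in>UNIV. u $ i) = 1}"

definition centre :: "real^'k" where
  "centre = (\<chi> i. 1 / real CARD('k))"

definition polar :: "nat \<Rightarrow> (real^'k) set \<Rightarrow> (real^'k) set" where
  "polar d A = {u \<in> hyperplane_H. \<forall>v\<in>A. inner u v \<ge> 1 / (real d * (real d + 1))}"

definition out_ball :: "nat \<Rightarrow> (real^'k) set" where
  "out_ball d = {u \<in> hyperplane_H. (norm (u - centre))^2 \<le> (real d - 1) / ((real d)^2 * (real d + 1))}"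

definition qplex :: "nat \<Rightarrow> (real^'k) set \<Rightarrow> bool" where
  "qplex d Q \<longleftrightarrow> Q \<subseteq> prob_simplex \<inter> out_ball d \<and> polar d Q = Q"

definition qss_isomorphism ::
  "(complex^'n^'n \<Rightarrow> real^'k) \<Rightarrow> (real^'k) set \<Rightarrow> bool" where
  "qss_isomorphism f Q \<longleftrightarrow>
     (\<exists>F :: complex^'n^'n \<Rightarrow> real^'k.
        (\<forall>A\<in>herm_ops. \<forall>B\<in>herm_ops. \<forall>a b::real.
            F (a *\<^sub>R A + b *\<^sub>R B) = a *\<^sub>R F A + b *\<^sub>R F B) \<and>
        bij_betw F herm_ops (UNIV :: (real^'k) set) \<and>
        (\<forall>\<rho>\<in>density_matrices. F \<rho> = f \<rho>) \<and>
        F ` density_matrices = Q \<and>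
        (\<forall>\<rho>\<in>density_matrices. \<forall>\<rho>'\<in>density_matrices.
            inner (F \<rho>) (F \<rho>') =
              (Re (trace (\<rho> ** \<rho>')) + 1) / (real CARD('n) * (real CARD('n) + 1))))"

definition hilbert_qplex :: "('n::finite) itself \<Rightarrow> (real^'k) set \<Rightarrow> bool" where
  "hilbert_qplex _ Q \<longleftrightarrow> qplex CARD('n) Q \<and>
     (\<exists>f :: complex^'n^'n \<Rightarrow> real^'k. qss_isomorphism f Q)"

end

theory Submission
  imports Defs
begin

text \<open>
  An isomorphism \<open>F\<close> reproduces the Hilbert--Schmidt geometry of the Hermitian operators up to
  the affine term \<open>tr A tr B\<close>. Hence \<open>P\<^sub>j = (F\<^sup>-\<^sup>1 e\<^sub>j + 1)/(d + 1)\<close> is a dual frame,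
  \<open>tr (A P\<^sub>j) = d (F A)\<^sub>j\<close>; applied to the \<open>P\<^sub>k\<close> themselves this yields
  \<open>tr (P\<^sub>k P\<^sub>l) = (d \<delta>\<^sub>k\<^sub>l + 1)/(d + 1)\<close>, and nonnegativity of \<open>F\<close> on states makes each \<open>P\<^sub>j\<close>
  positive with \<open>tr P\<^sub>j = tr P\<^sub>j\<^sup>2 = 1\<close>, i.e. a rank-one projector. Conversely the Gram matrix of a
  SIC is invertible, so a SIC is a basis of the Hermitian operators on which
  \<open>A \<mapsto> (tr (A \<Pi>\<^sub>j)/d)\<^sub>j\<close> reproduces the same geometry. The image of the states is then its own
  polar (a unit-trace operator with nonnegative overlap with all states is a state), and
  self-duality of \<open>Q\<close> squeezes \<open>Q\<close> onto that image.
\<close>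

definition quad_form :: "complex^'n^'n \<Rightarrow> complex^'n \<Rightarrow> complex" where
  "quad_form A x = (\<Sum>i\<in>UNIV. \<Sum>j\<in>UNIV. cnj (x $ i) * A $ i $ j * x $ j)"

definition sesq_form :: "complex^'n^'n \<Rightarrow> complex^'n \<Rightarrow> complex^'n \<Rightarrow> complex" where
  "sesq_form A y x = (\<Sum>i\<in>UNIV. \<Sum>j\<in>UNIV. cnj (y $ i) * A $ i $ j * x $ j)"

definition outer_prod :: "complex^'n \<Rightarrow> complex^'n^'n" where
  "outer_prod x = (\<chi> i j. x $ i * cnj (x $ j))"

definition hs_inner :: "complex^'n^'n \<Rightarrow> complex^'n^'n \<Rightarrow> real" where
  "hs_inner A B = Re (trace (A ** B))"

definition re_trace :: "complex^'n^'n \<Rightarrow> real" where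
  "re_trace A = Re (trace A)"

lemma quad_form_eq_sesq_form: "quad_form A x = sesq_form A x x"
  by (simp add: quad_form_def sesq_form_def)

lemma norm_power2_vec: "(norm x)\<^sup>2 = (\<Sum>i\<in>UNIV. (cmod (x $ i))\<^sup>2)"
  by (simp add: norm_vec_def L2_set_def sum_nonneg)

lemma cnj_mult_self: "cnj z * z = complex_of_real ((cmod z)\<^sup>2)"
  by (simp add: complex_mult_cnj[of z, simplified mult.commute] cmod_power2 mult.commute)

lemma mult_cnj_self: "z * cnj z = complex_of_real ((cmod z)\<^sup>2)"
  by (simp add: complex_mult_cnj cmod_power2)

lemma scaleR_complex: "c *\<^sub>R (z::complex) = complex_of_real c * z"
  by (simp add: scaleR_conv_of_real)

subsection \<open>Hermitian matrices and the Hilbert--Schmidt inner product\<close>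

lemma hermitian_iff: "hermitian A \<longleftrightarrow> (\<forall>i j. cnj (A $ i $ j) = A $ j $ i)"
  by (auto simp: hermitian_def adj_def vec_eq_iff)

lemma hermitian_cnj: "hermitian A \<Longrightarrow> cnj (A $ i $ j) = A $ j $ i"
  by (simp add: hermitian_iff)

lemma hermitian_diag: "hermitian A \<Longrightarrow> A $ i $ i = complex_of_real (Re (A $ i $ i))"
  using hermitian_cnj[of A i i] by (simp add: complex_eq_iff)

lemma hermitian_add: "hermitian A \<Longrightarrow> hermitian B \<Longrightarrow> hermitian (A + B)"
  by (simp add: hermitian_iff hermitian_cnj)
lemma hermitian_diff: "hermitian A \<Longrightarrow> hermitian B \<Longrightarrow> hermitian (A - B)"
  by (simp add: hermitian_iff hermitian_cnj)
lemma hermitian_scaleR: "hermitian A \<Longrightarrow> hermitian (c *\<^sub>R A)"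
  by (simp add: hermitian_iff hermitian_cnj)
lemma hermitian_zero: "hermitian 0"
  by (simp add: hermitian_iff)
lemma hermitian_one: "hermitian (mat 1)"
  by (simp add: hermitian_iff mat_def)
lemma hermitian_outer_prod: "hermitian (outer_prod x)"
  by (simp add: hermitian_iff outer_prod_def)

lemma mem_herm_ops: "A \<in> herm_ops \<longleftrightarrow> hermitian A"
  by (simp add: herm_ops_def)

lemma subspace_herm_ops: "subspace herm_ops"
  unfolding subspace_def herm_ops_def by (auto intro: hermitian_add hermitian_scaleR hermitian_zero)

lemma trace_hermitian: "hermitian A \<Longrightarrow> trace A = complex_of_real (re_trace A)"
  unfolding trace_def re_trace_def by (subst hermitian_diag) auto

lemma trace_mult_hermitian:
  assumes "hermitian A" "hermitian B"
  shows "trace (A ** B) = complex_of_real (hs_inner A B)"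
proof -
  have "cnj (trace (A ** B)) = (\<Sum>i\<in>UNIV. \<Sum>k\<in>UNIV. A $ k $ i * B $ i $ k)"
    using assms by (simp add: trace_def matrix_matrix_mult_def hermitian_cnj)
  also have "\<dots> = trace (A ** B)"
    by (subst sum.swap) (simp add: trace_def matrix_matrix_mult_def)
  finally have "Im (trace (A ** B)) = 0"
    by (simp add: complex_eq_iff)
  thus ?thesis by (simp add: hs_inner_def complex_eq_iff)
qed

lemma hs_inner_sum: "hs_inner A B = (\<Sum>i\<in>UNIV. \<Sum>k\<in>UNIV. Re (A $ i $ k * B $ k $ i))"
  by (simp add: hs_inner_def trace_def matrix_matrix_mult_def)

lemma re_trace_sum: "re_trace A = (\<Sum>i\<in>UNIV. Re (A $ i $ i))"
  by (simp add: re_trace_def trace_def)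

lemma hs_inner_commute: "hs_inner A B = hs_inner B A"
  unfolding hs_inner_def using trace_mul_sym[of A B] by (rule arg_cong)

lemma hs_inner_add_left: "hs_inner (A + B) C = hs_inner A C + hs_inner B C"
  by (simp add: hs_inner_sum distrib_right sum.distrib)
lemma hs_inner_add_right: "hs_inner C (A + B) = hs_inner C A + hs_inner C B"
  by (simp add: hs_inner_sum distrib_left sum.distrib)
lemma hs_inner_scaleR_left: "hs_inner (c *\<^sub>R A) C = c * hs_inner A C"
  by (simp add: hs_inner_sum sum_distrib_left)
lemma hs_inner_scaleR_right: "hs_inner C (c *\<^sub>R A) = c * hs_inner C A"
  by (simp add: hs_inner_sum sum_distrib_left)
lemma hs_inner_zero_left: "hs_inner 0 C = 0"
  by (simp add: hs_inner_sum)
lemma hs_inner_zero_right: "hs_inner C 0 = 0"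
  by (simp add: hs_inner_sum)
lemma hs_inner_one_left: "hs_inner (mat 1) C = re_trace C"
  by (simp add: hs_inner_def re_trace_def)
lemma hs_inner_one_right: "hs_inner C (mat 1) = re_trace C"
  by (simp add: hs_inner_def re_trace_def)

lemma re_trace_add: "re_trace (A + B) = re_trace A + re_trace B"
  by (simp add: re_trace_sum sum.distrib)
lemma re_trace_diff: "re_trace (A - B) = re_trace A - re_trace B"
  by (simp add: re_trace_sum sum_subtractf)
lemma re_trace_scaleR: "re_trace (c *\<^sub>R A) = c * re_trace A"
  by (simp add: re_trace_sum sum_distrib_left)
lemma re_trace_one: "re_trace (mat 1 :: complex^'n^'n) = real CARD('n)"
  by (simp add: re_trace_def trace_I)

lemma hs_inner_self_hermitian:
  assumes "hermitian A" shows "hs_inner A A = (\<Sum>i\<in>UNIV. \<Sum>k\<in>UNIV. (cmod (A $ i $ k))\<^sup>2)"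
  unfolding hs_inner_sum using assms
  by (intro sum.cong refl) (metis Re_complex_of_real hermitian_cnj mult_cnj_self)

lemma hs_inner_self_eq_0:
  assumes "hermitian A" "hs_inner A A = 0" shows "A = 0"
proof -
  have "(\<Sum>k\<in>UNIV. (cmod (A $ i $ k))\<^sup>2) = 0" for i
    using assms by (simp add: hs_inner_self_hermitian sum_nonneg_eq_0_iff sum_nonneg)
  thus ?thesis by (simp add: sum_nonneg_eq_0_iff vec_eq_iff)
qed

lemma trace_outer_prod_left: "trace (outer_prod x ** A) = quad_form A x"
proof -
  have "trace (outer_prod x ** A) = (\<Sum>i\<in>UNIV. \<Sum>k\<in>UNIV. x $ i * cnj (x $ k) * A $ k $ i)"
    by (simp add: trace_def matrix_matrix_mult_def outer_prod_def)
  also have "\<dots> = (\<Sum>k\<in>UNIV. \<Sum>i\<in>UNIV. cnj (x $ k) * A $ k $ i * x $ i)"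
    by (subst sum.swap) (simp add: mult_ac)
  finally show ?thesis by (simp add: quad_form_def)
qed

lemma hs_inner_outer_prod_left: "hs_inner (outer_prod x) A = Re (quad_form A x)"
  by (simp add: hs_inner_def trace_outer_prod_left)

lemma outer_prod_scale: "outer_prod (complex_of_real r *s v) = r\<^sup>2 *\<^sub>R outer_prod v"
  by (simp add: outer_prod_def vec_eq_iff scaleR_complex power2_eq_square mult_ac)

lemma re_trace_outer_prod: "re_trace (outer_prod v) = (norm v)\<^sup>2"
  by (simp add: re_trace_sum outer_prod_def mult_cnj_self norm_power2_vec)

subsection \<open>Positive semidefinite matrices\<close>

lemma sesq_form_add_right: "sesq_form A y (x + z) = sesq_form A y x + sesq_form A y z"
  by (simp add: sesq_form_def distrib_left sum.distrib)
lemma sesq_form_add_left: "sesq_form A (y + z) x = sesq_form A y x + sesq_form A z x"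
  by (simp add: sesq_form_def distrib_right sum.distrib)
lemma sesq_form_scale_right: "sesq_form A y (t *s x) = t * sesq_form A y x"
  by (simp add: sesq_form_def sum_distrib_left mult_ac)
lemma sesq_form_scale_left: "sesq_form A (t *s y) x = cnj t * sesq_form A y x"
  by (simp add: sesq_form_def sum_distrib_left mult_ac)

lemma sesq_form_hermitian:
  assumes "hermitian A" shows "sesq_form A x y = cnj (sesq_form A y x)"
proof -
  have "cnj (sesq_form A y x) = (\<Sum>i\<in>UNIV. \<Sum>j\<in>UNIV. y $ i * A $ j $ i * cnj (x $ j))"
    using assms by (simp add: sesq_form_def hermitian_cnj)
  also have "\<dots> = sesq_form A x y"
    by (subst sum.swap) (simp add: sesq_form_def mult_ac)
  finally show ?thesis by simp
qed

lemma quad_form_add_scaled: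
  assumes "hermitian A"
  shows "Re (quad_form A (x + t *s y))
           = Re (quad_form A x) + (cmod t)\<^sup>2 * Re (quad_form A y) + 2 * Re (cnj t * sesq_form A y x)"
proof -
  have "quad_form A (x + t *s y) = quad_form A x + t * cnj (sesq_form A y x)
          + cnj t * sesq_form A y x + cnj t * t * quad_form A y"
    by (simp add: quad_form_eq_sesq_form sesq_form_add_left sesq_form_add_right sesq_form_scale_left
        sesq_form_scale_right sesq_form_hermitian[OF assms, of x y] algebra_simps)
  thus ?thesis by (simp add: cnj_mult_self)
qed

lemma quad_form_diff: "quad_form (A - B) x = quad_form A x - quad_form B x"
  by (simp add: quad_form_def right_diff_distrib left_diff_distrib sum_subtractf)
lemma quad_form_add: "quad_form (A + B) x = quad_form A x + quad_form B x"
  by (simp add: quad_form_def distrib_left distrib_right sum.distrib)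
lemma quad_form_scaleR: "quad_form (c *\<^sub>R A) x = complex_of_real c * quad_form A x"
  by (simp add: quad_form_def sum_distrib_left scaleR_complex mult_ac)

lemma quad_form_outer_prod:
  "quad_form (outer_prod v) x = complex_of_real ((cmod (\<Sum>j\<in>UNIV. cnj (v $ j) * x $ j))\<^sup>2)"
proof -
  have "quad_form (outer_prod v) x
          = cnj (\<Sum>j\<in>UNIV. cnj (v $ j) * x $ j) * (\<Sum>j\<in>UNIV. cnj (v $ j) * x $ j)"
    by (simp add: quad_form_def outer_prod_def sum_product mult_ac)
  thus ?thesis by (simp only: cnj_mult_self)
qed

lemma quad_form_one: "quad_form (mat 1) x = complex_of_real ((norm x)\<^sup>2)"
proof -
  have "quad_form (mat 1) x = (\<Sum>i\<in>UNIV. cnj (x $ i) * x $ i)"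
    unfolding quad_form_def
    by (rule sum.cong) (simp_all add: mat_def if_distrib if_distribR sum.delta cong: if_cong)
  thus ?thesis by (simp add: cnj_mult_self norm_power2_vec)
qed

lemma sesq_form_axis_left: "sesq_form A (axis i 1) x = (\<Sum>j\<in>UNIV. A $ i $ j * x $ j)"
proof -
  have "sesq_form A (axis i 1) x
          = (\<Sum>i'\<in>UNIV. (if i' = i then 1 else 0) * (\<Sum>j\<in>UNIV. A $ i' $ j * x $ j))"
    unfolding sesq_form_def by (rule sum.cong) (simp_all add: axis_def sum_distrib_left mult_ac)
  thus ?thesis by (simp add: if_distrib if_distribR sum.delta cong: if_cong)
qed

lemma sesq_form_axis: "sesq_form A (axis i 1) (axis j 1) = A $ i $ j"
proof -
  have "(\<Sum>j'\<in>UNIV. A $ i $ j' * axis j 1 $ j') = (\<Sum>j'\<in>UNIV. if j' = j then A $ i $ j' else 0)"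
    by (rule sum.cong) (simp_all add: axis_def)
  thus ?thesis by (simp add: sesq_form_axis_left sum.delta')
qed

lemma quad_form_axis: "quad_form A (axis i 1) = A $ i $ i"
  by (simp add: quad_form_eq_sesq_form sesq_form_axis)

lemma psd_iff: "psd A \<longleftrightarrow> hermitian A \<and> (\<forall>x. 0 \<le> Re (quad_form A x))"
  by (simp add: psd_def quad_form_def)

lemma psd_hermitian: "psd A \<Longrightarrow> hermitian A"
  by (simp add: psd_iff)

lemma psd_quad_form_nonneg: "psd A \<Longrightarrow> 0 \<le> Re (quad_form A x)"
  by (simp add: psd_iff)

lemma psd_scaleR: "psd A \<Longrightarrow> 0 \<le> c \<Longrightarrow> psd (c *\<^sub>R A)"
  by (simp add: psd_iff hermitian_scaleR quad_form_scaleR)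

lemma psd_outer_prod: "psd (outer_prod v)"
  by (simp add: psd_iff hermitian_outer_prod quad_form_outer_prod)

lemma psd_one: "psd (mat 1)"
  by (simp add: psd_iff hermitian_one quad_form_one)

lemma psd_cauchy_schwarz:
  assumes "psd A"
  shows "(cmod (sesq_form A y x))\<^sup>2 \<le> Re (quad_form A y) * Re (quad_form A x)"
proof -
  define s where "s = sesq_form A y x"
  define a where "a = Re (quad_form A y)"
  define b where "b = Re (quad_form A x)"
  define S where "S = (cmod s)\<^sup>2"
  have a0: "0 \<le> a" and b0: "0 \<le> b" using assms by (simp_all add: a_def b_def psd_quad_form_nonneg)
  have key: "0 \<le> b + r\<^sup>2 * S * a - 2 * r * S" for r :: real
  proof -
    define t where "t = - (complex_of_real r * s)"
    have "0 \<le> Re (quad_form A (x + t *s y))" using assms by (rule psd_quad_form_nonneg)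
    also have "\<dots> = b + (cmod t)\<^sup>2 * a + 2 * Re (cnj t * s)"
      using quad_form_add_scaled[OF psd_hermitian[OF assms]] by (simp add: a_def b_def s_def)
    also have "(cmod t)\<^sup>2 = r\<^sup>2 * S"
      by (simp add: t_def S_def norm_mult power_mult_distrib)
    also have "Re (cnj t * s) = - r * S"
    proof -
      have "cnj t * s = - (complex_of_real r * (cnj s * s))" by (simp add: t_def mult_ac)
      thus ?thesis by (simp add: cnj_mult_self S_def)
    qed
    finally show ?thesis by (simp add: mult_ac)
  qed
  show ?thesis
  proof (cases "a = 0")
    case True
    have "S = 0"
    proof (rule ccontr)
      assume "S \<noteq> 0"
      hence "0 < S" by (simp add: S_def)
      have "0 \<le> b + ((b+1)/(2*S))\<^sup>2 * S * a - 2 * ((b+1)/(2*S)) * S" by (rule key)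
      also have "\<dots> = -1" using True \<open>0 < S\<close> by (simp add: field_simps)
      finally show False by simp
    qed
    thus ?thesis using a0 b0 by (simp add: S_def s_def a_def b_def)
  next
    case False
    hence ap: "0 < a" using a0 by simp
    \<comment> \<open>minimise the quadratic in \<open>r\<close> at \<open>r = 1/a\<close>\<close>
    have "0 \<le> b + (1/a)\<^sup>2 * S * a - 2 * (1/a) * S" by (rule key)
    also have "\<dots> = b - S / a" using ap by (simp add: field_simps power2_eq_square)
    finally have "S \<le> b * a" using ap by (simp add: field_simps)
    thus ?thesis by (simp add: S_def s_def a_def b_def mult.commute)
  qed
qed

lemma psd_diag_nonneg: "psd A \<Longrightarrow> 0 \<le> Re (A $ i $ i)"
  using psd_quad_form_nonneg[of A "axis i 1"] by (simp add: quad_form_axis)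

lemma psd_entry_bound: "psd A \<Longrightarrow> (cmod (A $ i $ j))\<^sup>2 \<le> Re (A $ i $ i) * Re (A $ j $ j)"
  using psd_cauchy_schwarz[of A "axis i 1" "axis j 1"] by (simp add: quad_form_axis sesq_form_axis)

lemma psd_row_eq_0: "psd A \<Longrightarrow> Re (A $ i $ i) = 0 \<Longrightarrow> A $ i $ j = 0"
  using psd_entry_bound[of A i j] by simp

lemma psd_re_trace_eq_0: assumes "psd A" "re_trace A = 0" shows "A = 0"
proof -
  have "Re (A $ i $ i) = 0" for i
    using assms by (simp add: re_trace_sum psd_diag_nonneg sum_nonneg_eq_0_iff)
  thus ?thesis using psd_row_eq_0[OF assms(1)] by (simp add: vec_eq_iff)
qed

lemma psd_hs_inner_self_le: assumes "psd A" shows "hs_inner A A \<le> (re_trace A)\<^sup>2"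
proof -
  have "hs_inner A A = (\<Sum>i\<in>UNIV. \<Sum>k\<in>UNIV. (cmod (A $ i $ k))\<^sup>2)"
    using psd_hermitian[OF assms] by (rule hs_inner_self_hermitian)
  also have "\<dots> \<le> (\<Sum>i\<in>UNIV. \<Sum>k\<in>UNIV. Re (A $ i $ i) * Re (A $ k $ k))"
    by (intro sum_mono psd_entry_bound[OF assms])
  also have "\<dots> = (re_trace A)\<^sup>2"
    by (simp add: re_trace_sum power2_eq_square sum_product)
  finally show ?thesis .
qed

definition schur_complement :: "complex^'n^'n \<Rightarrow> 'n \<Rightarrow> complex^'n^'n" where
  "schur_complement A i = A - (1 / Re (A $ i $ i)) *\<^sub>R outer_prod (column i A)"

lemma psd_schur_complement:
  assumes A: "psd A" and ap: "0 < Re (A $ i $ i)"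
  shows "psd (schur_complement A i)"
proof -
  define a where "a = Re (A $ i $ i)"
  have h: "hermitian A" using A by (rule psd_hermitian)
  have "0 \<le> Re (quad_form (schur_complement A i) x)" for x
  proof -
    define s where "s = sesq_form A (axis i 1) x"
    have "(\<Sum>j\<in>UNIV. cnj (column i A $ j) * x $ j) = s"
      unfolding s_def sesq_form_axis_left by (simp add: column_def hermitian_cnj[OF h])
    hence q: "Re (quad_form (schur_complement A i) x) = Re (quad_form A x) - (1/a) * (cmod s)\<^sup>2"
      by (simp add: schur_complement_def a_def quad_form_diff quad_form_scaleR quad_form_outer_prod)
    have "(cmod s)\<^sup>2 \<le> a * Re (quad_form A x)"
      using psd_cauchy_schwarz[OF A, of "axis i 1" x] by (simp add: s_def a_def quad_form_axis)
    hence "(1/a) * (cmod s)\<^sup>2 \<le> Re (quad_form A x)"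
      using ap by (simp add: a_def field_simps)
    thus ?thesis using q by simp
  qed
  moreover have "hermitian (schur_complement A i)"
    unfolding schur_complement_def by (intro hermitian_diff h hermitian_scaleR hermitian_outer_prod)
  ultimately show ?thesis by (simp add: psd_iff)
qed

definition nonzero_rows :: "complex^'n^'n \<Rightarrow> 'n set" where
  "nonzero_rows A = {i. \<exists>j. A $ i $ j \<noteq> 0}"

lemma nonzero_rows_schur_complement:
  assumes h: "hermitian A" and a: "Re (A $ i $ i) \<noteq> 0"
  shows "nonzero_rows (schur_complement A i) \<subseteq> nonzero_rows A - {i}"
proof -
  have entry: "schur_complement A i $ k $ l
                 = A $ k $ l - complex_of_real (1 / Re (A $ i $ i)) * (A $ k $ i * A $ i $ l)" for k l
    by (simp add: schur_complement_def outer_prod_def column_def hermitian_cnj[OF h] scaleR_complex)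
  have "schur_complement A i $ i $ l = 0" for l
    using a hermitian_diag[OF h, of i] by (simp add: entry) (metis nonzero_mult_div_cancel_left
        divide_complex_def mult.assoc mult_1 of_real_1 of_real_divide of_real_eq_0_iff)
  moreover have "schur_complement A i $ k $ l = 0" if "k \<notin> nonzero_rows A" for k l
    using that by (simp add: entry nonzero_rows_def)
  ultimately show ?thesis unfolding nonzero_rows_def by blast
qed

lemma hs_inner_psd_nonneg:
  assumes "psd A" "psd B" shows "0 \<le> hs_inner A B"
  using assms(1)
proof (induction "card (nonzero_rows A)" arbitrary: A rule: less_induct)
  case less
  show ?case
  proof (cases "nonzero_rows A = {}")
    case True
    hence "A = 0" by (auto simp: nonzero_rows_def vec_eq_iff)
    thus ?thesis by (simp add: hs_inner_zero_left)
  next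
    case False
    then obtain i j where ij: "A $ i $ j \<noteq> 0" by (auto simp: nonzero_rows_def)
    define a where "a = Re (A $ i $ i)"
    have "a \<noteq> 0" using psd_row_eq_0[OF less.prems, of i j] ij by (auto simp: a_def)
    hence ap: "0 < a" using psd_diag_nonneg[OF less.prems, of i] by (simp add: a_def)
    have "i \<in> nonzero_rows A" using ij by (auto simp: nonzero_rows_def)
    moreover have "nonzero_rows (schur_complement A i) \<subseteq> nonzero_rows A - {i}"
      using nonzero_rows_schur_complement[OF psd_hermitian[OF less.prems]] \<open>a \<noteq> 0\<close>
      by (simp add: a_def)
    ultimately have "nonzero_rows (schur_complement A i) \<subset> nonzero_rows A"
      by blast
    hence "0 \<le> hs_inner (schur_complement A i) B"
      using less.hyps psd_schur_complement[OF less.prems] ap by (simp add: a_def psubset_card_mono)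
    moreover have "0 \<le> hs_inner (outer_prod (column i A)) B"
      using psd_quad_form_nonneg[OF assms(2)] by (simp add: hs_inner_outer_prod_left)
    moreover have "A = (1 / a) *\<^sub>R outer_prod (column i A) + schur_complement A i"
      by (simp add: schur_complement_def a_def)
    ultimately show ?thesis
      using ap by (metis hs_inner_add_left hs_inner_scaleR_left add_nonneg_nonneg
          divide_nonneg_nonneg less_eq_real_def mult_nonneg_nonneg zero_le_one)
  qed
qed

\<comment> \<open>If \<open>tr A\<^sup>2 = (tr A)\<^sup>2\<close>, every entry bound of \<open>psd_entry_bound\<close> is attained, so a Schur
  complement of \<open>A\<close> has trace \<open>0\<close>.\<close>
lemma psd_pure_state:
  assumes A: "psd A" and tr: "re_trace A = 1" and sq: "hs_inner A A = 1"
  shows "\<exists>w. A = outer_prod w \<and> norm w = 1"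
proof -
  define D where "D i k = Re (A $ i $ i) * Re (A $ k $ k) - (cmod (A $ i $ k))\<^sup>2" for i k
  have D0: "0 \<le> D i k" for i k using psd_entry_bound[OF A, of i k] by (simp add: D_def)
  have "(\<Sum>i\<in>UNIV. \<Sum>k\<in>UNIV. D i k) = (re_trace A)\<^sup>2 - hs_inner A A"
    by (simp add: D_def sum_subtractf hs_inner_self_hermitian[OF psd_hermitian[OF A]] re_trace_sum
        power2_eq_square sum_product)
  hence Dz: "D i k = 0" for i k
    using tr sq D0 by (simp add: sum_nonneg_eq_0_iff sum_nonneg)
  obtain i0 where ap: "0 < Re (A $ i0 $ i0)"
    using tr psd_diag_nonneg[OF A] unfolding re_trace_sum
    by (metis (no_types, lifting) less_eq_real_def sum.neutral zero_neq_one)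
  define a where "a = Re (A $ i0 $ i0)"
  define c where "c = column i0 A"
  have "(cmod (c $ k))\<^sup>2 = Re (A $ k $ k) * a" for k
    using Dz[of k i0] by (simp add: D_def c_def column_def a_def)
  hence "(norm c)\<^sup>2 = a"
    using tr by (simp add: norm_power2_vec re_trace_sum sum_distrib_right[symmetric])
  hence "re_trace (schur_complement A i0) = 0"
    using ap tr by (simp add: schur_complement_def re_trace_diff re_trace_scaleR re_trace_outer_prod
        c_def a_def)
  hence "schur_complement A i0 = 0"
    by (rule psd_re_trace_eq_0[OF psd_schur_complement[OF A ap]])
  moreover have "outer_prod (complex_of_real (1 / sqrt a) *s c) = (1 / a) *\<^sub>R outer_prod c"
    unfolding outer_prod_scale using ap by (simp add: power_divide a_def)
  ultimately have "A = outer_prod (complex_of_real (1 / sqrt a) *s c)"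
    by (simp add: schur_complement_def a_def c_def)
  moreover from this have "(norm (complex_of_real (1 / sqrt a) *s c))\<^sup>2 = 1"
    using tr by (simp add: re_trace_outer_prod)
  ultimately show ?thesis by (metis abs_norm_cancel real_sqrt_abs real_sqrt_one)
qed

\<comment> \<open>All rows of \<open>outer_prod w\<close> are multiples of \<open>cnj w\<close>, and the row of a nonzero entry is a nonzero one.\<close>
lemma rank_outer_prod:
  assumes "w \<noteq> 0" shows "rank (outer_prod w) = 1"
proof -
  define u where "u = (\<chi> j. cnj (w $ j))"
  obtain i0 where wi0: "w $ i0 \<noteq> 0" using assms by (metis vec_eq_iff zero_index)
  have rows_sub: "rows (outer_prod w) \<subseteq> vec.span {u}"
  proof
    fix r assume "r \<in> rows (outer_prod w)"
    then obtain i where "r = row i (outer_prod w)" by (auto simp: rows_def)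
    hence "r = w $ i *s u" by (simp add: row_def u_def outer_prod_def vec_eq_iff)
    thus "r \<in> vec.span {u}" by (simp add: vec.span_base vec.span_scale)
  qed
  have "u = (1 / w $ i0) *s row i0 (outer_prod w)"
    using wi0 by (simp add: row_def u_def outer_prod_def vec_eq_iff)
  moreover have "row i0 (outer_prod w) \<in> rows (outer_prod w)" by (auto simp: rows_def)
  ultimately have "u \<in> vec.span (rows (outer_prod w))"
    by (simp add: vec.span_base vec.span_scale)
  hence "vec.span (rows (outer_prod w)) = vec.span {u}"
    using rows_sub by (simp add: vec.span_eq vec.span_base)
  hence "rank (outer_prod w) = vec.dim {u}"
    by (metis row_rank_def_gen vec.dim_span)
  moreover have "u \<noteq> 0" using wi0 by (simp add: u_def vec_eq_iff) (metis complex_cnj_zero_iff)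
  ultimately show ?thesis by (simp add: vec.dim_eq_card_independent vec.dependent_single)
qed

lemma rank_one_projector_outer_prod:
  assumes w: "norm w = 1" shows "rank_one_projector (outer_prod w)"
proof -
  have "(outer_prod w ** outer_prod w) $ i $ j = outer_prod w $ i $ j" for i j
  proof -
    have "(outer_prod w ** outer_prod w) $ i $ j
            = (\<Sum>k\<in>UNIV. w $ i * cnj (w $ j) * (cnj (w $ k) * w $ k))"
      by (simp add: matrix_matrix_mult_def outer_prod_def mult_ac)
    also have "\<dots> = w $ i * cnj (w $ j) * complex_of_real ((norm w)\<^sup>2)"
      by (simp add: cnj_mult_self sum_distrib_left norm_power2_vec)
    finally show ?thesis using w by (simp add: outer_prod_def)
  qed
  moreover have "w \<noteq> 0" using w by auto
  ultimately show ?thesis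
    by (simp add: rank_one_projector_def hermitian_outer_prod rank_outer_prod vec_eq_iff)
qed

lemma psd_projector:
  assumes h: "hermitian P" and idem: "P ** P = P" shows "psd P"
proof -
  have cnj_mult_vec: "cnj ((P *v x) $ k) = (\<Sum>i\<in>UNIV. cnj (x $ i) * P $ i $ k)" for x k
    by (simp add: matrix_vector_mult_def hermitian_cnj[OF h] mult.commute)
  have "quad_form P x = complex_of_real ((norm (P *v x))\<^sup>2)" for x
  proof -
    have "quad_form (P ** P) x = (\<Sum>i\<in>UNIV. \<Sum>j\<in>UNIV. \<Sum>k\<in>UNIV. cnj (x $ i) * P $ i $ k * (P $ k $ j * x $ j))"
      by (simp add: quad_form_def matrix_matrix_mult_def sum_distrib_left sum_distrib_right mult_ac)
    also have "\<dots> = (\<Sum>i\<in>UNIV. \<Sum>k\<in>UNIV. \<Sum>j\<in>UNIV. cnj (x $ i) * P $ i $ k * (P $ k $ j * x $ j))"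
      by (rule sum.cong[OF refl], rule sum.swap)
    also have "\<dots> = (\<Sum>k\<in>UNIV. \<Sum>i\<in>UNIV. \<Sum>j\<in>UNIV. cnj (x $ i) * P $ i $ k * (P $ k $ j * x $ j))"
      by (rule sum.swap)
    also have "\<dots> = (\<Sum>k\<in>UNIV. cnj ((P *v x) $ k) * (P *v x) $ k)"
      by (simp only: cnj_mult_vec) (simp add: matrix_vector_mult_def sum_product mult.assoc)
    finally show ?thesis using idem by (simp add: cnj_mult_self norm_power2_vec)
  qed
  thus ?thesis using h by (simp add: psd_iff)
qed

subsection \<open>The space of Hermitian operators and the state space\<close>

lemma dim_herm_ops: "dim (herm_ops :: (complex^'n^'n) set) = CARD('n)\<^sup>2"
proof -
  let ?H = "herm_ops :: (complex^'n^'n) set"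
  define J :: "complex^'n^'n \<Rightarrow> complex^'n^'n" where "J A = (\<chi> i j. \<i> * A $ i $ j)" for A
  let ?W = "J ` ?H"
  have linJ: "linear J"
    by (rule linearI) (simp_all add: J_def vec_eq_iff distrib_left scaleR_complex mult_ac)
  have "inj J" by (rule injI) (simp add: J_def vec_eq_iff)
  hence dW: "dim ?W = dim ?H" by (intro dim_image_eq[OF linJ]) (auto intro: inj_on_subset)
  have "?H \<inter> ?W \<subseteq> {0}"
  proof
    fix B assume "B \<in> ?H \<inter> ?W"
    then obtain A where hB: "hermitian B" and hA: "hermitian A" and B: "B = J A"
      by (auto simp: mem_herm_ops)
    have "B $ i $ j = - B $ i $ j" for i j
      using hermitian_cnj[OF hB, of j i] by (simp add: B J_def hermitian_cnj[OF hA])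
    thus "B \<in> {0}" by (simp add: vec_eq_iff)
  qed
  hence dint: "dim (?H \<inter> ?W) = 0" by (simp add: dim_eq_0)
  \<comment> \<open>Cartesian decomposition \<open>M = H + \<i> K\<close> into Hermitian parts\<close>
  have "{x + y |x y. x \<in> ?H \<and> y \<in> ?W} = UNIV"
  proof (rule set_eqI, rule iffI)
    fix M :: "complex^'n^'n"
    define H where "H = (\<chi> i j. (M $ i $ j + cnj (M $ j $ i)) / 2)"
    define K where "K = (\<chi> i j. (M $ i $ j - cnj (M $ j $ i)) / (2 * \<i>))"
    have "hermitian H" by (simp add: H_def hermitian_iff add.commute)
    moreover have "J K \<in> ?W" by (simp add: K_def hermitian_iff mem_herm_ops field_simps)
    moreover have "M = H + J K" by (simp add: H_def K_def J_def vec_eq_iff field_simps)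
    ultimately show "M \<in> {x + y |x y. x \<in> ?H \<and> y \<in> ?W}" by (auto simp: mem_herm_ops)
  qed simp
  moreover have "dim (UNIV :: (complex^'n^'n) set) = 2 * CARD('n)\<^sup>2"
    by (simp add: dim_UNIV power2_eq_square)
  moreover have "dim {x + y |x y. x \<in> ?H \<and> y \<in> ?W} + dim (?H \<inter> ?W) = dim ?H + dim ?W"
    by (rule dim_sums_Int[OF subspace_herm_ops linear_subspace_image[OF linJ subspace_herm_ops]])
  ultimately show ?thesis using dW dint by simp
qed

lemma density_matrices_iff: "\<rho> \<in> density_matrices \<longleftrightarrow> psd \<rho> \<and> re_trace \<rho> = 1"
  using trace_hermitian[OF psd_hermitian, of \<rho>] by (auto simp: density_matrices_def)

lemma density_hermitian: "\<rho> \<in> density_matrices \<Longrightarrow> hermitian \<rho>"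
  by (simp add: density_matrices_iff psd_hermitian)

lemma density_re_trace: "\<rho> \<in> density_matrices \<Longrightarrow> re_trace \<rho> = 1"
  by (simp add: density_matrices_iff)

lemma normalized_outer_prod_density:
  assumes "x \<noteq> 0" shows "(1 / (norm x)\<^sup>2) *\<^sub>R outer_prod x \<in> density_matrices"
  using assms by (simp add: density_matrices_iff psd_scaleR psd_outer_prod re_trace_scaleR
      re_trace_outer_prod)

lemma psd_if_hs_inner_density_nonneg:
  assumes h: "hermitian A" and nn: "\<And>\<rho>. \<rho> \<in> density_matrices \<Longrightarrow> 0 \<le> hs_inner A \<rho>"
  shows "psd A"
proof -
  have "0 \<le> Re (quad_form A x)" for x
  proof (cases "x = 0")
    case True thus ?thesis by (simp add: quad_form_def)
  next
    case False
    define \<rho> where "\<rho> = (1 / (norm x)\<^sup>2) *\<^sub>R outer_prod x"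
    have "outer_prod x = (norm x)\<^sup>2 *\<^sub>R \<rho>" using False by (simp add: \<rho>_def)
    hence "Re (quad_form A x) = (norm x)\<^sup>2 * hs_inner A \<rho>"
      by (metis hs_inner_commute hs_inner_outer_prod_left hs_inner_scaleR_left)
    moreover have "\<rho> \<in> density_matrices"
      unfolding \<rho>_def using False by (rule normalized_outer_prod_density)
    ultimately show ?thesis using nn by simp
  qed
  thus ?thesis using h by (simp add: psd_iff)
qed

lemma quad_form_lower_bound:
  "- (\<Sum>i\<in>UNIV. \<Sum>j\<in>UNIV. cmod (A $ i $ j)) * (norm x)\<^sup>2 \<le> Re (quad_form A x)"
proof -
  define N where "N = (norm x)\<^sup>2"
  have xi: "(cmod (x $ i))\<^sup>2 \<le> N" for i
    unfolding N_def norm_power2_vec by (rule member_le_sum) simp_all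
  have bnd: "cmod (x $ i) * cmod (x $ j) \<le> N" for i j
  proof -
    have "cmod (x $ i) * cmod (x $ j) \<le> ((cmod (x $ i))\<^sup>2 + (cmod (x $ j))\<^sup>2) / 2"
      using sum_squares_bound[of "cmod (x $ i)" "cmod (x $ j)"] by (simp add: power2_eq_square)
    also have "\<dots> \<le> N" using xi[of i] xi[of j] by simp
    finally show ?thesis .
  qed
  have "cmod (quad_form A x) \<le> (\<Sum>i\<in>UNIV. \<Sum>j\<in>UNIV. cmod (cnj (x $ i) * A $ i $ j * x $ j))"
    unfolding quad_form_def by (rule order_trans[OF norm_sum sum_mono]) (rule norm_sum)
  also have "\<dots> \<le> (\<Sum>i\<in>UNIV. \<Sum>j\<in>UNIV. cmod (A $ i $ j) * N)"
  proof (intro sum_mono)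
    fix i j
    have "cmod (cnj (x $ i) * A $ i $ j * x $ j) = cmod (A $ i $ j) * (cmod (x $ i) * cmod (x $ j))"
      by (simp add: norm_mult)
    also have "\<dots> \<le> cmod (A $ i $ j) * N" by (rule mult_left_mono[OF bnd]) simp
    finally show "cmod (cnj (x $ i) * A $ i $ j * x $ j) \<le> cmod (A $ i $ j) * N" .
  qed
  finally have "cmod (quad_form A x) \<le> (\<Sum>i\<in>UNIV. \<Sum>j\<in>UNIV. cmod (A $ i $ j)) * N"
    by (simp add: sum_distrib_right)
  thus ?thesis using abs_Re_le_cmod[of "quad_form A x"] unfolding N_def by linarith
qed

lemma hermitian_density_combination:
  assumes h: "hermitian (A :: complex^'n^'n)"
  obtains a b \<rho>1 \<rho>2 where "\<rho>1 \<in> density_matrices" "\<rho>2 \<in> density_matrices"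
    "A = a *\<^sub>R \<rho>1 + b *\<^sub>R \<rho>2"
proof -
  define T where "T = 1 + (\<Sum>i\<in>UNIV. \<Sum>j\<in>UNIV. cmod (A $ i $ j))"
  define B where "B = A + T *\<^sub>R mat 1"
  have qB: "(norm x)\<^sup>2 \<le> Re (quad_form B x)" for x
    using quad_form_lower_bound[of A x]
    by (simp add: B_def T_def quad_form_add quad_form_scaleR quad_form_one algebra_simps)
  have pB: "psd B"
    using qB h unfolding psd_iff B_def
    by (meson hermitian_add hermitian_one hermitian_scaleR order_trans zero_le_power2)
  have "re_trace B \<noteq> 0"
  proof
    assume "re_trace B = 0"
    hence "B = 0" by (rule psd_re_trace_eq_0[OF pB])
    thus False using qB[of "axis undefined 1"] by (simp add: quad_form_def)
  qed
  moreover have "0 \<le> re_trace B" by (simp add: re_trace_sum sum_nonneg psd_diag_nonneg[OF pB])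
  ultimately have "(1 / re_trace B) *\<^sub>R B \<in> density_matrices"
    using pB by (simp add: density_matrices_iff psd_scaleR re_trace_scaleR)
  moreover have "(1 / real CARD('n)) *\<^sub>R (mat 1 :: complex^'n^'n) \<in> density_matrices"
    by (simp add: density_matrices_iff psd_scaleR psd_one re_trace_scaleR re_trace_one)
  moreover have "A = re_trace B *\<^sub>R ((1 / re_trace B) *\<^sub>R B)
                       + (- T * real CARD('n)) *\<^sub>R ((1 / real CARD('n)) *\<^sub>R mat 1)"
    using \<open>re_trace B \<noteq> 0\<close> by (simp add: B_def)
  ultimately show ?thesis using that by blast
qed

subsection \<open>Maps reproducing the Hilbert--Schmidt geometry\<close>

locale state_space_map =
  fixes F :: "complex^'n^'n \<Rightarrow> real^'k"
  assumes map_add: "hermitian A \<Longrightarrow> hermitian B \<Longrightarrow> F (A + B) = F A + F B"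
    and map_scaleR: "hermitian A \<Longrightarrow> F (c *\<^sub>R A) = c *\<^sub>R F A"
    and inner_map: "hermitian A \<Longrightarrow> hermitian B \<Longrightarrow>
      inner (F A) (F B) = (hs_inner A B + re_trace A * re_trace B) / (real CARD('n) * (real CARD('n) + 1))"
    and sum_map: "hermitian A \<Longrightarrow> (\<Sum>j\<in>UNIV. F A $ j) = re_trace A"
begin

lemma map_diff: "hermitian A \<Longrightarrow> hermitian B \<Longrightarrow> F (A - B) = F A - F B"
  using map_add[of A "(-1) *\<^sub>R B"] map_scaleR[of B "-1"] hermitian_scaleR[of B "-1"] by simp

lemma inj_on_herm_ops: "inj_on F herm_ops"
proof (rule inj_onI)
  fix A B assume "A \<in> herm_ops" "B \<in> herm_ops" "F A = F B"
  hence hC: "hermitian (A - B)" and "F (A - B) = 0"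
    by (simp_all add: mem_herm_ops hermitian_diff map_diff)
  hence "hs_inner (A - B) (A - B) + (re_trace (A - B))\<^sup>2 = 0"
    using inner_map[OF hC hC] by (simp add: power2_eq_square)
  moreover have "0 \<le> hs_inner (A - B) (A - B)"
    by (simp add: hs_inner_self_hermitian[OF hC] sum_nonneg)
  ultimately have "hs_inner (A - B) (A - B) = 0" by (smt (verit) zero_le_power2)
  thus "A = B" using hs_inner_self_eq_0[OF hC] by simp
qed

lemma inner_map_density:
  "\<rho> \<in> density_matrices \<Longrightarrow> \<sigma> \<in> density_matrices \<Longrightarrow>
     inner (F \<rho>) (F \<sigma>) = (hs_inner \<rho> \<sigma> + 1) / (real CARD('n) * (real CARD('n) + 1))"
  by (simp add: inner_map density_hermitian density_re_trace)

lemma map_density_in_hyperplane_H: "\<rho> \<in> density_matrices \<Longrightarrow> F \<rho> \<in> hyperplane_H"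
  by (simp add: hyperplane_H_def sum_map density_hermitian density_re_trace)

lemma qss_isomorphism_image:
  assumes "bij_betw F herm_ops UNIV" "\<forall>\<rho>\<in>density_matrices. F \<rho> = f \<rho>"
  shows "qss_isomorphism f (F ` density_matrices)"
  unfolding qss_isomorphism_def
proof (intro exI conjI)
  show "\<forall>A\<in>herm_ops. \<forall>B\<in>herm_ops. \<forall>a b. F (a *\<^sub>R A + b *\<^sub>R B) = a *\<^sub>R F A + b *\<^sub>R F B"
    by (simp add: mem_herm_ops map_add map_scaleR hermitian_scaleR)
  show "\<forall>\<rho>\<in>density_matrices. \<forall>\<rho>'\<in>density_matrices. inner (F \<rho>) (F \<rho>')
          = (Re (trace (\<rho> ** \<rho>')) + 1) / (real CARD('n) * (real CARD('n) + 1))"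
    by (simp add: inner_map_density hs_inner_def)
qed (use assms in auto)

lemma image_density_subset_polar:
  "F ` density_matrices \<subseteq> polar CARD('n) (F ` density_matrices)"
proof -
  have "1 / (real CARD('n) * (real CARD('n) + 1)) \<le> inner (F \<rho>) (F \<sigma>)"
    if "\<rho> \<in> density_matrices" "\<sigma> \<in> density_matrices" for \<rho> \<sigma>
    using that hs_inner_psd_nonneg[of \<rho> \<sigma>]
    by (simp add: inner_map_density density_matrices_iff divide_right_mono)
  thus ?thesis by (auto simp: polar_def map_density_in_hyperplane_H)
qed

\<comment> \<open>A point of the polar pulls back to a unit-trace Hermitian \<open>A\<close> with \<open>tr (A \<rho>) \<ge> 0\<close> on all states,
  i.e. to a state.\<close>
lemma polar_image_density_subset:
  assumes surj: "F ` herm_ops = UNIV"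
  shows "polar CARD('n) (F ` density_matrices) \<subseteq> F ` density_matrices"
proof
  fix u assume u: "u \<in> polar CARD('n) (F ` density_matrices)"
  obtain A where hA: "hermitian A" and FA: "F A = u"
    using surj by (metis UNIV_I imageE mem_herm_ops)
  have rA: "re_trace A = 1"
    using u sum_map[OF hA] by (simp add: FA polar_def hyperplane_H_def)
  have "0 \<le> hs_inner A \<rho>" if s: "\<rho> \<in> density_matrices" for \<rho>
  proof -
    have "1 / (real CARD('n) * (real CARD('n) + 1)) \<le> inner u (F \<rho>)"
      using u s by (auto simp: polar_def)
    also have "inner u (F \<rho>) = (hs_inner A \<rho> + 1) / (real CARD('n) * (real CARD('n) + 1))"
      using inner_map[OF hA density_hermitian[OF s]] s by (simp add: FA rA density_re_trace)
    finally show ?thesis by (simp add: divide_le_cancel)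
  qed
  hence "A \<in> density_matrices"
    using psd_if_hs_inner_density_nonneg[OF hA] rA by (simp add: density_matrices_iff)
  thus "u \<in> F ` density_matrices" using FA by blast
qed

lemma image_density_subset_out_ball:
  assumes card: "CARD('k) = CARD('n)\<^sup>2"
  shows "F ` density_matrices \<subseteq> out_ball CARD('n)"
proof
  fix u assume "u \<in> F ` density_matrices"
  then obtain \<rho> where s: "\<rho> \<in> density_matrices" and u: "u = F \<rho>" by blast
  define d where "d = real CARD('n)"
  have d0: "0 < d" by (simp add: d_def)
  have uH: "u \<in> hyperplane_H" using map_density_in_hyperplane_H[OF s] by (simp add: u)
  have cc: "centre $ i = 1 / (d * d)" for i :: 'k
    by (simp add: centre_def card d_def power2_eq_square)
  have "(norm (u - centre))\<^sup>2 = inner u u - 2 * inner u centre + inner centre (centre :: real^'k)"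
    by (simp add: power2_norm_eq_inner inner_diff_left inner_diff_right inner_commute)
  also have "\<dots> = (hs_inner \<rho> \<rho> + 1) / (d * (d + 1)) - 1 / (d * d)"
    using uH d0 inner_map_density[OF s s]
    by (simp add: u inner_vec_def cc hyperplane_H_def card d_def power2_eq_square
        sum_divide_distrib[symmetric])
  also have "\<dots> \<le> 2 / (d * (d + 1)) - 1 / (d * d)"
    using psd_hs_inner_self_le[of \<rho>] s d0 by (simp add: density_matrices_iff divide_right_mono)
  also have "\<dots> = (d - 1) / (d\<^sup>2 * (d + 1))"
    using d0 by (simp add: divide_simps) (simp add: algebra_simps power2_eq_square)
  finally show "u \<in> out_ball CARD('n)" using uH by (simp add: out_ball_def d_def)
qed

context
  assumes surj: "F ` herm_ops = UNIV"
begin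

lemma eq_if_inner_map_eq:
  assumes "\<And>A. hermitian A \<Longrightarrow> inner v (F A) = inner w (F A)" shows "v = w"
proof -
  obtain A where "hermitian A" "F A = v - w" using surj by (metis UNIV_I imageE mem_herm_ops)
  hence "inner (v - w) (v - w) = 0" using assms[of A] by (simp add: inner_diff_left)
  thus ?thesis by simp
qed

lemma map_one: "F (mat 1) = (\<chi> j. 1 / real CARD('n))"
proof (rule eq_if_inner_map_eq)
  fix A :: "complex^'n^'n" assume hA: "hermitian A"
  have "inner (F (mat 1)) (F A)
          = re_trace A * (real CARD('n) + 1) / (real CARD('n) * (real CARD('n) + 1))"
    using inner_map[OF hermitian_one hA] by (simp add: hs_inner_one_left re_trace_one algebra_simps)
  also have "\<dots> = re_trace A / real CARD('n)"
    by (metis mult_divide_mult_cancel_right of_nat_add of_nat_eq_0_iff of_nat_1 add_eq_0_iff_both_eq_0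
        zero_neq_one)
  also have "\<dots> = inner (\<chi> j. 1 / real CARD('n)) (F A)"
    using sum_map[OF hA] by (simp add: inner_vec_def sum_divide_distrib[symmetric])
  finally show "inner (F (mat 1)) (F A) = inner (\<chi> j. 1 / real CARD('n)) (F A)" .
qed

lemma card_eq: "CARD('k) = CARD('n)\<^sup>2"
proof -
  have "real CARD('k) / real CARD('n) = real CARD('n)"
    using sum_map[OF hermitian_one] by (simp add: map_one re_trace_one)
  hence "real CARD('k) = real (CARD('n)\<^sup>2)" by (simp add: field_simps power2_eq_square)
  thus ?thesis using of_nat_eq_iff by blast
qed

\<comment> \<open>\<open>P j = (B\<^sub>j + 1)/(d + 1)\<close>, where \<open>B\<^sub>j\<close> is the preimage of the \<open>j\<close>-th unit vector.\<close>
lemma dual_frame: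
  obtains P :: "'k \<Rightarrow> complex^'n^'n" where "\<And>j. hermitian (P j)"
    "\<And>A j. hermitian A \<Longrightarrow> hs_inner A (P j) = real CARD('n) * F A $ j"
proof -
  define d where "d = real CARD('n)"
  have "\<exists>B. hermitian B \<and> F B = axis j 1" for j using surj by (metis UNIV_I imageE mem_herm_ops)
  then obtain B where hB: "\<And>j. hermitian (B j)" and FB: "\<And>j. F (B j) = axis j 1" by metis
  have rB: "re_trace (B j) = 1" for j using sum_map[OF hB, of j] by (simp add: FB axis_def)
  define P where "P j = (1 / (d + 1)) *\<^sub>R (B j + mat 1)" for j
  have "hs_inner A (P j) = d * F A $ j" if hA: "hermitian A" for A j
  proof -
    have "hs_inner A (P j) = (hs_inner A (B j) + re_trace A * re_trace (B j)) / (d + 1)"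
      by (simp add: P_def hs_inner_scaleR_right hs_inner_add_right hs_inner_one_right rB)
    also have "hs_inner A (B j) + re_trace A * re_trace (B j) = d * (d + 1) * F A $ j"
    proof -
      have "F A $ j = (hs_inner A (B j) + re_trace A * re_trace (B j)) / (d * (d + 1))"
        using inner_map[OF hA hB[of j]] by (simp add: FB inner_axis d_def)
      moreover have "d * (d + 1) \<noteq> 0" by (simp add: d_def)
      ultimately show ?thesis by simp
    qed
    finally show ?thesis by (simp add: d_def)
  qed
  moreover have "hermitian (P j)" for j
    by (simp add: P_def hermitian_scaleR hermitian_add hB hermitian_one)
  ultimately show ?thesis using that[of P] by (simp add: d_def)
qed

context
  fixes P :: "'k \<Rightarrow> complex^'n^'n"
  assumes hP: "\<And>j. hermitian (P j)"
    and frame: "\<And>A j. hermitian A \<Longrightarrow> hs_inner A (P j) = real CARD('n) * F A $ j"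
begin

lemma re_trace_dual_frame: "re_trace (P j) = 1"
  using frame[OF hermitian_one, of j] by (simp add: hs_inner_one_left map_one)

lemma map_dual_frame:
  "F (P k) = (\<chi> l. (real CARD('n) * (if k = l then 1 else 0) + 1) / (real CARD('n) * (real CARD('n) + 1)))"
proof (rule eq_if_inner_map_eq)
  define d where "d = real CARD('n)"
  fix A :: "complex^'n^'n" assume hA: "hermitian A"
  have "inner (F (P k)) (F A) = (d * F A $ k + re_trace A) / (d * (d + 1))"
    using inner_map[OF hP hA] by (simp add: hs_inner_commute frame[OF hA] re_trace_dual_frame d_def)
  also have "d * F A $ k + re_trace A = (\<Sum>l\<in>UNIV. (d * (if k = l then 1 else 0) + 1) * F A $ l)"
  proof -
    have "(\<Sum>l\<in>UNIV. (d * (if k = l then 1 else 0) + 1) * F A $ l)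
            = (\<Sum>l\<in>UNIV. (if k = l then d * F A $ l else 0) + F A $ l)"
      by (rule sum.cong) (auto simp: algebra_simps)
    thus ?thesis using sum_map[OF hA] by (simp add: sum.distrib)
  qed
  also have "\<dots> / (d * (d + 1))
               = inner (\<chi> l. (d * (if k = l then 1 else 0) + 1) / (d * (d + 1))) (F A)"
    by (simp add: inner_vec_def sum_divide_distrib)
  finally show "inner (F (P k)) (F A) = inner (\<chi> l. (real CARD('n) * (if k = l then 1 else 0) + 1)
                  / (real CARD('n) * (real CARD('n) + 1))) (F A)"
    by (simp add: d_def)
qed

lemma hs_inner_dual_frame:
  "hs_inner (P k) (P l) = (real CARD('n) * (if k = l then 1 else 0) + 1) / (real CARD('n) + 1)"
  using frame[OF hP, of k l] by (simp add: map_dual_frame)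

lemma is_SIC_dual_frame:
  assumes nonneg: "\<And>\<rho> j. \<rho> \<in> density_matrices \<Longrightarrow> 0 \<le> F \<rho> $ j"
  shows "is_SIC P"
proof -
  have "rank_one_projector (P j)" for j
  proof -
    have "psd (P j)"
    proof (rule psd_if_hs_inner_density_nonneg[OF hP])
      fix \<rho> :: "complex^'n^'n" assume "\<rho> \<in> density_matrices"
      thus "0 \<le> hs_inner (P j) \<rho>"
        using nonneg[of \<rho> j] frame[OF density_hermitian, of \<rho> j] by (simp add: hs_inner_commute)
    qed
    moreover have "hs_inner (P j) (P j) = 1" by (simp add: hs_inner_dual_frame)
    ultimately obtain w where "P j = outer_prod w" "norm w = 1"
      using psd_pure_state re_trace_dual_frame by blast
    thus ?thesis by (simp add: rank_one_projector_outer_prod)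
  qed
  moreover have "inj P"
  proof (rule injI, rule ccontr)
    fix k l assume "P k = P l" "k \<noteq> l"
    thus False using hs_inner_dual_frame[of k l] hs_inner_dual_frame[of l l] by simp
  qed
  ultimately show ?thesis
    unfolding is_SIC_def using card_eq by (simp add: trace_mult_hermitian hP hs_inner_dual_frame)
qed

end

end

end

lemma state_space_mapI:
  fixes F :: "complex^'n^'n \<Rightarrow> real^'k"
  assumes lin: "\<forall>A\<in>herm_ops. \<forall>B\<in>herm_ops. \<forall>a b::real.
                  F (a *\<^sub>R A + b *\<^sub>R B) = a *\<^sub>R F A + b *\<^sub>R F B"
    and ip: "\<forall>\<rho>\<in>density_matrices. \<forall>\<sigma>\<in>density_matrices.
               inner (F \<rho>) (F \<sigma>) = (Re (trace (\<rho> ** \<sigma>)) + 1) / (real CARD('n) * (real CARD('n) + 1))"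
    and sum1: "\<forall>\<rho>\<in>density_matrices. (\<Sum>j\<in>UNIV. F \<rho> $ j) = 1"
  shows "state_space_map F"
proof
  have add: "F (A + B) = F A + F B" if "hermitian A" "hermitian B" for A B
    using lin that[unfolded mem_herm_ops[symmetric]] by (metis scaleR_one)
  have scale: "F (c *\<^sub>R A) = c *\<^sub>R F A" if "hermitian A" for A c
    using lin that[unfolded mem_herm_ops[symmetric]] by (metis add.right_neutral scaleR_zero_left)
  show "F (A + B) = F A + F B" if "hermitian A" "hermitian B" for A B using add that .
  show "F (c *\<^sub>R A) = c *\<^sub>R F A" if "hermitian A" for A c using scale that .
  \<comment> \<open>Both remaining identities extend from states by writing \<open>A\<close> and \<open>B\<close> as combinations of states.\<close>
  have combination: "F A = a *\<^sub>R F \<rho>1 + b *\<^sub>R F \<rho>2"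
    if "A = a *\<^sub>R \<rho>1 + b *\<^sub>R \<rho>2" "\<rho>1 \<in> density_matrices" "\<rho>2 \<in> density_matrices" for A a b \<rho>1 \<rho>2
    using that by (simp add: add scale density_hermitian hermitian_scaleR)
  show "(\<Sum>j\<in>UNIV. F A $ j) = re_trace A" if hA: "hermitian A" for A
  proof -
    obtain a b \<rho>1 \<rho>2 where s: "\<rho>1 \<in> density_matrices" "\<rho>2 \<in> density_matrices"
      and A: "A = a *\<^sub>R \<rho>1 + b *\<^sub>R \<rho>2" using hermitian_density_combination[OF hA] .
    show ?thesis unfolding combination[OF A s] using sum1 s
      by (simp add: A sum.distrib sum_distrib_left[symmetric] re_trace_add re_trace_scaleR
          density_re_trace)
  qed
  show "inner (F A) (F B)
          = (hs_inner A B + re_trace A * re_trace B) / (real CARD('n) * (real CARD('n) + 1))"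
    if hA: "hermitian A" and hB: "hermitian B" for A B
  proof -
    define c where "c = real CARD('n) * (real CARD('n) + 1)"
    have ip': "inner (F \<rho>) (F \<sigma>) = (hs_inner \<rho> \<sigma> + re_trace \<rho> * re_trace \<sigma>) / c"
      if "\<rho> \<in> density_matrices" "\<sigma> \<in> density_matrices" for \<rho> \<sigma>
      using ip that by (simp add: hs_inner_def density_re_trace c_def)
    obtain a b \<rho>1 \<rho>2 where s: "\<rho>1 \<in> density_matrices" "\<rho>2 \<in> density_matrices"
      and A: "A = a *\<^sub>R \<rho>1 + b *\<^sub>R \<rho>2" using hermitian_density_combination[OF hA] .
    obtain a' b' \<sigma>1 \<sigma>2 where t: "\<sigma>1 \<in> density_matrices" "\<sigma>2 \<in> density_matrices"
      and B: "B = a' *\<^sub>R \<sigma>1 + b' *\<^sub>R \<sigma>2" using hermitian_density_combination[OF hB] .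
    show ?thesis
      unfolding combination[OF A s] combination[OF B t] c_def[symmetric]
      by (simp add: A B inner_add_left inner_add_right ip' s t hs_inner_add_left hs_inner_add_right
          hs_inner_scaleR_left hs_inner_scaleR_right re_trace_add re_trace_scaleR add_divide_distrib
          algebra_simps)
  qed
qed

subsection \<open>SICs\<close>

context
  fixes P :: "'k::finite \<Rightarrow> complex^'n^'n"
  assumes SIC: "is_SIC P"
begin

lemma is_SIC_hermitian: "hermitian (P j)"
  using SIC by (simp add: is_SIC_def rank_one_projector_def)

lemma is_SIC_psd: "psd (P j)"
  using SIC by (intro psd_projector) (simp_all add: is_SIC_def rank_one_projector_def)

lemma is_SIC_hs_inner:
  "hs_inner (P k) (P l) = (real CARD('n) * (if k = l then 1 else 0) + 1) / (real CARD('n) + 1)"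
  using SIC by (simp add: is_SIC_def hs_inner_def)

lemma is_SIC_re_trace: "re_trace (P j) = 1"
proof -
  have "P j ** P j = P j" using SIC by (simp add: is_SIC_def rank_one_projector_def)
  hence "re_trace (P j) = hs_inner (P j) (P j)" by (simp add: re_trace_def hs_inner_def)
  thus ?thesis by (simp add: is_SIC_hs_inner)
qed

lemma is_SIC_card: "CARD('k) = CARD('n)\<^sup>2"
  using SIC by (simp add: is_SIC_def)

\<comment> \<open>Pairing \<open>\<Sum>\<^sub>k c\<^sub>k P\<^sub>k = 0\<close> with \<open>P\<^sub>j\<close> forces all \<open>c\<^sub>j\<close> to equal \<open>-(\<Sum>\<^sub>k c\<^sub>k)/d\<close>, and summing then
  gives \<open>\<Sum>\<^sub>k c\<^sub>k = 0\<close>.\<close>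
lemma is_SIC_independent: "independent (range P)"
proof
  define d where "d = real CARD('n)"
  have d0: "0 < d" by (simp add: d_def)
  have injP: "inj P" using SIC by (simp add: is_SIC_def)
  assume "dependent (range P)"
  then obtain u where u: "\<exists>v\<in>range P. u v \<noteq> 0" and z: "(\<Sum>v\<in>range P. u v *\<^sub>R v) = 0"
    using dependent_finite[of "range P"] by auto
  define c where "c k = u (P k)" for k
  define s where "s = (\<Sum>k\<in>UNIV. c k)"
  have z': "(\<Sum>k\<in>UNIV. c k *\<^sub>R P k) = 0"
    using z by (simp add: sum.reindex[OF inj_on_subset[OF injP subset_UNIV]] c_def o_def)
  have pair: "d * c j + s = 0" for j
  proof -
    have expand: "hs_inner (P j) (\<Sum>k\<in>K. c k *\<^sub>R P k) = (\<Sum>k\<in>K. c k * hs_inner (P j) (P k))"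
      if "finite K" for K
      using that by (induction K rule: finite_induct)
        (simp_all add: hs_inner_add_right hs_inner_scaleR_right hs_inner_zero_right)
    have "0 = (\<Sum>k\<in>UNIV. c k * hs_inner (P j) (P k))"
      using z' expand[of UNIV] by (simp add: hs_inner_zero_right)
    also have "\<dots> = (\<Sum>k\<in>UNIV. c k * (d * (if j = k then 1 else 0) + 1)) / (d + 1)"
      by (simp add: is_SIC_hs_inner d_def sum_divide_distrib)
    also have "(\<Sum>k\<in>UNIV. c k * (d * (if j = k then 1 else 0) + 1))
                 = (\<Sum>k\<in>UNIV. (if j = k then d * c k else 0) + c k)"
      by (rule sum.cong) (auto simp: algebra_simps)
    also have "\<dots> = d * c j + s" by (simp add: s_def sum.distrib)
    finally show ?thesis using d0 by simp
  qed
  have c: "c j = - s / d" for j using pair[of j] d0 by (simp add: field_simps)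
  hence "sum c UNIV = (\<Sum>k\<in>(UNIV::'k set). - s / d)" by simp
  hence "s = - real CARD('k) * s / d" by (simp add: s_def[symmetric])
  also have "\<dots> = - d * s" using d0 by (simp add: is_SIC_card d_def power2_eq_square)
  finally have "(1 + d) * s = 0" by (simp add: algebra_simps)
  hence "s = 0" using d0 by simp
  thus False using u c by (auto simp: c_def)
qed

lemma is_SIC_span: "herm_ops \<subseteq> span (range P)"
proof (rule card_ge_dim_independent)
  show "range P \<subseteq> herm_ops" by (auto simp: mem_herm_ops is_SIC_hermitian)
  have "card (range P) = CARD('n)\<^sup>2"
    using SIC by (simp add: is_SIC_def card_image)
  thus "dim (herm_ops :: (complex^'n^'n) set) \<le> card (range P)" by (simp add: dim_herm_ops)
qed (rule is_SIC_independent)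

end

definition sic_map :: "('k \<Rightarrow> complex^'n^'n) \<Rightarrow> complex^'n^'n \<Rightarrow> real^'k" where
  "sic_map P A = (\<chi> j. hs_inner A (P j) / real CARD('n))"

lemma sic_map_add: "sic_map P (A + B) = sic_map P A + sic_map P B"
  by (simp add: sic_map_def vec_eq_iff hs_inner_add_left add_divide_distrib)

lemma sic_map_scaleR: "sic_map P (c *\<^sub>R A) = c *\<^sub>R sic_map P A"
  by (simp add: sic_map_def vec_eq_iff hs_inner_scaleR_left)

lemma linear_sic_map: "linear (sic_map P)"
  by (rule linearI) (simp_all add: sic_map_add sic_map_scaleR)

context
  fixes P :: "'k::finite \<Rightarrow> complex^'n^'n"
  assumes SIC: "is_SIC P"
begin

lemma sic_map_SIC: "sic_map P (P k) $ l
    = (real CARD('n) * (if k = l then 1 else 0) + 1) / (real CARD('n) * (real CARD('n) + 1))"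
  by (simp add: sic_map_def is_SIC_hs_inner[OF SIC] mult.commute)

lemma inner_sic_map_SIC:
  "inner (sic_map P (P k)) (sic_map P (P l))
     = (hs_inner (P k) (P l) + re_trace (P k) * re_trace (P l)) / (real CARD('n) * (real CARD('n) + 1))"
proof -
  define d where "d = real CARD('n)"
  have d0: "0 < d" by (simp add: d_def)
  have "inner (sic_map P (P k)) (sic_map P (P l))
          = (\<Sum>j\<in>UNIV. (d * (if k = j then 1 else 0) + 1) * (d * (if l = j then 1 else 0) + 1))
            / (d * (d + 1))\<^sup>2"
    by (simp add: inner_vec_def sic_map_SIC d_def sum_divide_distrib power2_eq_square)
  also have "(\<Sum>j\<in>UNIV. (d * (if k = j then 1 else 0) + 1) * (d * (if l = j then 1 else 0) + 1))
               = (\<Sum>j\<in>UNIV. (if j = k then d * d * (if k = l then 1 else 0) + d else 0)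
                                + (if j = l then d else 0) + 1)"
    by (rule sum.cong) (auto simp: algebra_simps)
  also have "\<dots> = d * (d * (if k = l then 1 else 0) + 1 + (d + 1))"
    by (simp add: sum.distrib is_SIC_card[OF SIC] d_def algebra_simps power2_eq_square)
  also have "d * (x + (d + 1)) / (d * (d + 1))\<^sup>2 = (x / (d + 1) + 1) / (d * (d + 1))" for x
    using d0 by (simp add: divide_simps) (simp add: algebra_simps power2_eq_square)
  finally show ?thesis by (simp add: is_SIC_hs_inner[OF SIC] is_SIC_re_trace[OF SIC] d_def)
qed

lemma sum_sic_map_SIC: "(\<Sum>j\<in>UNIV. sic_map P (P k) $ j) = re_trace (P k)"
proof -
  define d where "d = real CARD('n)"
  have "(\<Sum>j\<in>UNIV. sic_map P (P k) $ j) = (\<Sum>j\<in>UNIV. (if j = k then d else 0) + 1) / (d * (d + 1))"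
    by (simp add: sic_map_SIC d_def[symmetric] sum_divide_distrib[symmetric] eq_commute[of k]
        if_distrib cong: if_cong)
  also have "\<dots> = d * (d + 1) / (d * (d + 1))"
    by (simp add: sum.distrib is_SIC_card[OF SIC] d_def algebra_simps power2_eq_square)
  finally show ?thesis by (simp add: is_SIC_re_trace[OF SIC] d_def)
qed

\<comment> \<open>Both identities are (bi)linear and hold on the SIC, which spans the Hermitian operators.\<close>
lemma state_space_map_sic_map: "state_space_map (sic_map P)"
proof
  show "inner (sic_map P A) (sic_map P B)
          = (hs_inner A B + re_trace A * re_trace B) / (real CARD('n) * (real CARD('n) + 1))"
    if "hermitian A" "hermitian B" for A B
  proof (rule bilinear_eq[where f = "\<lambda>A B. inner (sic_map P A) (sic_map P B)"])
    show "bilinear (\<lambda>A B. inner (sic_map P A) (sic_map P B))"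
      by (simp add: bilinear_def linear_iff sic_map_add sic_map_scaleR inner_add_left inner_add_right)
    show "bilinear (\<lambda>A B. (hs_inner A B + re_trace A * re_trace B) / (real CARD('n) * (real CARD('n) + 1)))"
      by (simp add: bilinear_def linear_iff hs_inner_add_left hs_inner_add_right hs_inner_scaleR_left
          hs_inner_scaleR_right re_trace_add re_trace_scaleR add_divide_distrib algebra_simps)
    show "{A} \<subseteq> span (range P)" "{B} \<subseteq> span (range P)"
      using that is_SIC_span[OF SIC] by (auto simp: mem_herm_ops)
  qed (auto simp: inner_sic_map_SIC)
  show "(\<Sum>j\<in>UNIV. sic_map P A $ j) = re_trace A" if "hermitian A" for A
  proof (rule linear_eq_on_span[where f = "\<lambda>A. \<Sum>j\<in>UNIV. sic_map P A $ j"])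
    show "linear (\<lambda>A. \<Sum>j\<in>UNIV. sic_map P A $ j)"
      by (simp add: linear_iff sic_map_add sic_map_scaleR sum.distrib sum_distrib_left)
    show "linear re_trace" by (simp add: linear_iff re_trace_add re_trace_scaleR)
    show "A \<in> span (range P)" using that is_SIC_span[OF SIC] by (auto simp: mem_herm_ops)
  qed (auto simp: sum_sic_map_SIC)
qed (simp_all add: sic_map_add sic_map_scaleR)

lemma bij_betw_sic_map: "bij_betw (sic_map P) herm_ops UNIV"
proof -
  have inj: "inj_on (sic_map P) herm_ops"
    by (rule state_space_map.inj_on_herm_ops[OF state_space_map_sic_map])
  have "dim (sic_map P ` herm_ops) = dim (herm_ops :: (complex^'n^'n) set)"
    using inj by (intro dim_image_eq[OF linear_sic_map])
      (simp add: span_eq_iff[THEN iffD2, OF subspace_herm_ops])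
  also have "\<dots> = DIM(real^'k)" by (simp add: dim_herm_ops is_SIC_card[OF SIC])
  finally have "span (sic_map P ` herm_ops) = UNIV" by (rule dim_eq_full[THEN iffD1])
  hence "sic_map P ` herm_ops = UNIV"
    using linear_subspace_image[OF linear_sic_map subspace_herm_ops] span_eq_iff by metis
  thus ?thesis using inj by (simp add: bij_betw_def)
qed

lemma qplex_sic_map_image: "qplex CARD('n) (sic_map P ` density_matrices)"
proof -
  interpret state_space_map "sic_map P" by (rule state_space_map_sic_map)
  have "sic_map P ` density_matrices \<subseteq> prob_simplex"
  proof
    fix u assume "u \<in> sic_map P ` density_matrices"
    then obtain \<rho> where s: "\<rho> \<in> density_matrices" and u: "u = sic_map P \<rho>" by blast
    have "0 \<le> u $ j" for j
      using hs_inner_psd_nonneg[OF _ is_SIC_psd[OF SIC]] s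
      by (simp add: u sic_map_def density_matrices_iff)
    thus "u \<in> prob_simplex"
      using map_density_in_hyperplane_H[OF s] by (simp add: prob_simplex_def hyperplane_H_def u)
  qed
  moreover have "sic_map P ` density_matrices \<subseteq> out_ball CARD('n)"
    by (rule image_density_subset_out_ball[OF is_SIC_card[OF SIC]])
  moreover have "polar CARD('n) (sic_map P ` density_matrices) = sic_map P ` density_matrices"
    using polar_image_density_subset image_density_subset_polar bij_betw_sic_map
    by (simp add: bij_betw_def subset_antisym)
  ultimately show ?thesis by (simp add: qplex_def)
qed

end

lemma polar_antimono: "A \<subseteq> B \<Longrightarrow> polar d B \<subseteq> polar d A"
  by (auto simp: polar_def)

lemma SIC_of_qss_isomorphism:
  fixes f :: "complex^'n^'n \<Rightarrow> real^'k"
  assumes Q: "Q \<subseteq> prob_simplex" and iso: "qss_isomorphism f Q"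
  shows "\<exists>P :: 'k \<Rightarrow> complex^'n^'n. is_SIC P \<and>
           (\<forall>\<rho>\<in>density_matrices. \<forall>j. f \<rho> $ j = Re (trace (\<rho> ** P j)) / real CARD('n))"
proof -
  obtain F :: "complex^'n^'n \<Rightarrow> real^'k" where
    lin: "\<forall>A\<in>herm_ops. \<forall>B\<in>herm_ops. \<forall>a b::real. F (a *\<^sub>R A + b *\<^sub>R B) = a *\<^sub>R F A + b *\<^sub>R F B"
    and bij: "bij_betw F herm_ops UNIV" and agree: "\<forall>\<rho>\<in>density_matrices. F \<rho> = f \<rho>"
    and img: "F ` density_matrices = Q"
    and ip: "\<forall>\<rho>\<in>density_matrices. \<forall>\<sigma>\<in>density_matrices.
               inner (F \<rho>) (F \<sigma>) = (Re (trace (\<rho> ** \<sigma>)) + 1) / (real CARD('n) * (real CARD('n) + 1))"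
    using iso unfolding qss_isomorphism_def by blast
  have simplex: "F \<rho> \<in> prob_simplex" if "\<rho> \<in> density_matrices" for \<rho> using img Q that by blast
  interpret state_space_map F
    using simplex by (intro state_space_mapI[OF lin ip]) (simp add: prob_simplex_def)
  have surj: "F ` herm_ops = UNIV" using bij by (simp add: bij_betw_def)
  obtain P where hP: "\<And>j. hermitian (P j)"
    and frame: "\<And>A j. hermitian A \<Longrightarrow> hs_inner A (P j) = real CARD('n) * F A $ j"
    using dual_frame[OF surj] by blast
  have "is_SIC P"
    using simplex by (intro is_SIC_dual_frame[OF surj hP frame]) (auto simp: prob_simplex_def)
  moreover have "f \<rho> $ j = Re (trace (\<rho> ** P j)) / real CARD('n)" if "\<rho> \<in> density_matrices" for \<rho> j
    using frame[OF density_hermitian[OF that]] agree that by (simp add: hs_inner_def)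
  ultimately show ?thesis by blast
qed

lemma qss_isomorphism_of_SIC:
  fixes f :: "complex^'n^'n \<Rightarrow> real^'k" and P :: "'k \<Rightarrow> complex^'n^'n"
  assumes Q: "polar CARD('n) Q = Q" and fQ: "f ` density_matrices \<subseteq> Q" and SIC: "is_SIC P"
    and f: "\<forall>\<rho>\<in>density_matrices. \<forall>j. f \<rho> $ j = Re (trace (\<rho> ** P j)) / real CARD('n)"
  shows "qss_isomorphism f Q"
proof -
  interpret state_space_map "sic_map P" by (rule state_space_map_sic_map[OF SIC])
  have agree: "\<forall>\<rho>\<in>density_matrices. sic_map P \<rho> = f \<rho>"
    using f by (simp add: vec_eq_iff sic_map_def hs_inner_def)
  hence sub: "sic_map P ` density_matrices \<subseteq> Q" using fQ by auto
  have "Q \<subseteq> polar CARD('n) (sic_map P ` density_matrices)"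
    using Q polar_antimono[OF sub, of "CARD('n)"] by simp
  also have "\<dots> \<subseteq> sic_map P ` density_matrices"
    using bij_betw_sic_map[OF SIC] by (intro polar_image_density_subset) (simp add: bij_betw_def)
  finally have "sic_map P ` density_matrices = Q" using sub by blast
  thus ?thesis using qss_isomorphism_image[OF bij_betw_sic_map[OF SIC] agree] by simp
qed

theorem mainTheorem17:
  fixes Q :: "(real^'k) set" and f :: "complex^'n^'n \<Rightarrow> real^'k"
  assumes "CARD('n) \<ge> 2"
    and "CARD('k) = CARD('n)^2"
    and "qplex CARD('n) Q"
    and "f ` density_matrices \<subseteq> Q"
  shows "(qss_isomorphism f Q \<longleftrightarrow>
            (\<exists>P :: 'k \<Rightarrow> complex^'n^'n. is_SIC P \<and>
               (\<forall>\<rho>\<in>density_matrices. \<forall>j.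
                   f \<rho> $ j = Re (trace (\<rho> ** P j)) / real CARD('n))))
         \<and> ((\<exists>P :: 'k \<Rightarrow> complex^'n^'n. is_SIC P) \<longleftrightarrow>
            (\<exists>Q' :: (real^'k) set. hilbert_qplex TYPE('n) Q'))"
proof -
  have Q: "Q \<subseteq> prob_simplex" "polar CARD('n) Q = Q" using assms(3) by (auto simp: qplex_def)
  have "(\<exists>P :: 'k \<Rightarrow> complex^'n^'n. is_SIC P) \<longleftrightarrow> (\<exists>Q' :: (real^'k) set. hilbert_qplex TYPE('n) Q')"
  proof
    assume "\<exists>P :: 'k \<Rightarrow> complex^'n^'n. is_SIC P"
    then obtain P :: "'k \<Rightarrow> complex^'n^'n" where SIC: "is_SIC P" ..
    have "qss_isomorphism (sic_map P) (sic_map P ` density_matrices)"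
      by (rule state_space_map.qss_isomorphism_image[OF state_space_map_sic_map bij_betw_sic_map])
        (simp_all add: SIC)
    thus "\<exists>Q' :: (real^'k) set. hilbert_qplex TYPE('n) Q'"
      using qplex_sic_map_image[OF SIC] unfolding hilbert_qplex_def by blast
  next
    assume "\<exists>Q' :: (real^'k) set. hilbert_qplex TYPE('n) Q'"
    thus "\<exists>P :: 'k \<Rightarrow> complex^'n^'n. is_SIC P"
      unfolding hilbert_qplex_def qplex_def using SIC_of_qss_isomorphism by blast
  qed
  thus ?thesis using SIC_of_qss_isomorphism[OF Q(1)] qss_isomorphism_of_SIC[OF Q(2) assms(4)] by blast
qed

end
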